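(* Define $k:[0,1]\times[0,1]\to\mathbb{R}$ by $k(a,b)=a\ln\frac{a+b}{a}+b\ln\frac{a+b}{b}$ (equivalently $k(a,b)=\eta(a)+\eta(b)-\eta(a+b)$ with $\eta(u)=-u\ln u$, $\eta(0)=0$). Then $k$ is a positive definite kernel on $[0,1]$. Moreover, for all $x,y\in(0,1]$, $$k(x,y)=\int_{\mathbb R}\Phi_w(x)^*\,\Phi_w(y)\,dw,\qquad \Phi_w(x)=e^{-iw\ln x}\sqrt{x\,\rho(w)},\quad \rho(w)=\frac{2\,\mathrm{sech}(\pi w)}{1+4w^2},$$ where ${}^*$ denotes complex conjugation.
   Context: A symmetric map $k:\mathcal X\times\mathcal X\to\mathbb R$ is a positive definite kernel if $\sum_{i,j=1}^n a_ia_jk(x_i,x_j)\ge0$ for all $n$, all $a_1,\dots,a_n\in\mathbb R$ and all $x_1,\dots,x_n\in\mathcal X$. Convention: $0\ln 0=0$. *)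

theory Defs
  imports "HOL-Analysis.Analysis"
begin

definition eta :: "real \<Rightarrow> real" where
  "eta u = (if u = 0 then 0 else - u * ln u)"

definition kent :: "real \<Rightarrow> real \<Rightarrow> real" where
  "kent a b = eta a + eta b - eta (a + b)"

definition pos_def_kernel :: "'a set \<Rightarrow> ('a \<Rightarrow> 'a \<Rightarrow> real) \<Rightarrow> bool" where
  "pos_def_kernel X k \<longleftrightarrow>
     (\<forall>x\<in>X. \<forall>y\<in>X. k x y = k y x) \<and>
     (\<forall>n::nat. \<forall>a::nat \<Rightarrow> real. \<forall>x::nat \<Rightarrow> 'a. (\<forall>i\<in>{1..n}. x i \<in> X) \<longrightarrow>
        (\<Sum>i=1..n. \<Sum>j=1..n. a i * a j * k (x i) (x j)) \<ge> 0)"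

definition rho :: "real \<Rightarrow> real" where
  "rho w = 2 * (1 / cosh (pi * w)) / (1 + 4 * w\<^sup>2)"

definition Phi :: "real \<Rightarrow> real \<Rightarrow> complex" where
  "Phi w x = exp (- \<i> * complex_of_real (w * ln x)) * complex_of_real (sqrt (x * rho w))"

end

theory Submission
  imports Defs "HOL-Complex_Analysis.Complex_Analysis" "HOL-Probability.Sinc_Integral"
    "HOL-Real_Asymp.Real_Asymp"
begin

text \<open>
  For \<open>x, y > 0\<close> one has \<open>kent x y = sqrt (x * y) * rho_hat (ln x - ln y)\<close>, where
  \<open>rho_hat t = exp (t/2) ln (1 + exp (-t)) + exp (-t/2) ln (1 + exp t)\<close>; so the integral
  representation says that \<open>rho_hat\<close> is the Fourier transform of \<open>rho\<close>.
  Since \<open>rho w = 2 sech (pi w) \<integral>\<^sub>0\<^sup>\<infinity> exp (-r) cos (2 w r) dr\<close>, Fubini reduces this to the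
  classical transform \<open>\<integral> cos (w u) sech (pi w) dw = sech (u/2)\<close> and the elementary integral
  \<open>\<integral>\<^sub>0\<^sup>\<infinity> exp (-r) sech (a + r) dr = exp a ln (1 + exp (-2a))\<close>.
  The transform of sech is obtained by integrating \<open>exp (i z u) sech (pi z)\<close> around the
  rectangle \<open>[-R, R] \<times> [0, 1]\<close>: the only pole inside is \<open>i/2\<close>, the top side is
  \<open>-exp (-u)\<close> times the bottom side, and the vertical sides vanish as \<open>R \<rightarrow> \<infinity>\<close>.
  Positive definiteness follows since \<open>Phi w 0 = 0\<close> and the quadratic form of \<open>kent\<close> is the
  integral of \<open>|\<Sum>\<^sub>i a\<^sub>i Phi w (x\<^sub>i)|\<^sup>2\<close>.
\<close>

section \<open>The Fourier transform of the hyperbolic secant\<close>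

lemma cosh_Complex: "cosh (Complex x y) = Complex (cosh x * cos y) (sinh x * sin y)"
  by (simp add: cosh_def sinh_def complex_eq_iff exp_eq_polar Re_exp Im_exp field_simps)

lemma sinh_Complex: "sinh (Complex x y) = Complex (sinh x * cos y) (cosh x * sin y)"
  by (simp add: cosh_def sinh_def complex_eq_iff exp_eq_polar Re_exp Im_exp field_simps)

lemma cosh_plus_i_pi: "cosh (z + \<i> * pi) = - cosh (z :: complex)"
proof -
  have "\<i> * (z + \<i> * pi) = \<i> * z - pi" by (simp add: algebra_simps)
  then show ?thesis by (simp add: cosh_conv_cos cos_diff)
qed

lemma abs_sinh_le_norm_cosh_Complex: "\<bar>sinh x\<bar> \<le> norm (cosh (Complex x y))"
proof -
  have "(cosh x * cos y)^2 + (sinh x * sin y)^2 =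
          (sinh x)^2 * ((sin y)^2 + (cos y)^2) + (cos y)^2 * ((cosh x)^2 - (sinh x)^2)"
    unfolding power_mult_distrib by algebra
  also have "\<dots> = (sinh x)^2 + (cos y)^2"
    by (simp add: cosh_square_eq)
  finally have "norm (cosh (Complex x y)) = sqrt ((sinh x)^2 + (cos y)^2)"
    by (simp add: cosh_Complex cmod_def)
  also have "\<dots> \<ge> sqrt ((sinh x)^2)"
    by (intro real_sqrt_le_mono) simp
  finally show ?thesis by simp
qed

lemma holomorphic_on_cosh [holomorphic_intros]:
  "f holomorphic_on A \<Longrightarrow> (\<lambda>x. cosh (f x)) holomorphic_on A"
  unfolding cosh_def by (intro holomorphic_intros)

lemma cosh_pi_eq_0_imp:
  fixes z :: complex
  assumes "cosh (pi * z) = 0"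
  shows "Re z = 0 \<and> cos (pi * Im z) = 0"
proof -
  obtain x y where z: "z = Complex x y" by (cases z)
  have "pi * z = Complex (pi * x) (pi * y)" by (simp add: z complex_eq_iff)
  then have "cosh (pi * x) * cos (pi * y) = 0" "sinh (pi * x) * sin (pi * y) = 0"
    using assms by (simp_all only:) (simp_all add: cosh_Complex complex_eq_iff)
  moreover have "cosh (pi * x) > 0" by simp
  ultimately have "cos (pi * y) = 0" "sin (pi * y) \<noteq> 0" "sinh (pi * x) = 0"
    using sin_cos_squared_add[of "pi * y"] by auto
  then show ?thesis using z by simp
qed

lemma has_contour_integral_linepath_same_Im_iff:
  assumes "Im z = c" "Im z' = c" "Re z = a" "Re z' = b" "a < b"
  shows   "(f has_contour_integral I) (linepath z z') \<longleftrightarrow>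
             ((\<lambda>x. f (Complex x c)) has_integral I) {a..b}"
proof -
  have "(f has_contour_integral I) (linepath z z') \<longleftrightarrow>
          ((\<lambda>x. f (linepath z z' x) * (z' - z)) has_integral I) {0..1}"
    by (subst has_contour_integral_linepath) simp_all
  also have "\<dots> \<longleftrightarrow> ((\<lambda>x. f (Complex (a + (b - a) * x) c) * of_real (b - a)) has_integral I) {0..1}"
    using assms
    by (intro has_integral_cong arg_cong2[of _ _ _ _ "(*)"] arg_cong[of _ _ f])
       (auto simp: linepath_def complex_eq_iff algebra_simps)
  also have "{0..1} = (\<lambda>x. x / (b - a)) ` {0..b-a}"
    using assms by simp
  also have "((\<lambda>x. f (Complex (a + (b - a) * x) c) * of_real (b - a)) has_integral I) \<dots> \<longleftrightarrow>
             ((\<lambda>x. f (Complex (a + x) c) * of_real (b - a)) has_integral ((b-a) *\<^sub>R I)) {0..b-a}"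
    by (subst has_integral_stretch_real_iff) (use assms in simp_all)
  also have "\<dots> \<longleftrightarrow> ((\<lambda>x. of_real (b-a) * (f (Complex x c))) has_integral (b-a) *\<^sub>R I) {a..b}"
    by (subst has_integral_shift_real_ivl_iff[where c = "-a"])
       (simp_all add: scaleR_conv_of_real mult_ac)
  also have "\<dots> \<longleftrightarrow> ((\<lambda>x. f (Complex x c)) has_integral I) {a..b}"
    by (subst has_integral_mult_right_iff) (use assms in \<open>auto simp: scaleR_conv_of_real\<close>)
  finally show ?thesis .
qed

definition exp_sech :: "real \<Rightarrow> complex \<Rightarrow> complex" where
  "exp_sech u z = exp (\<i> * z * of_real u) / cosh (of_real pi * z)"

lemma exp_sech_plus_i: "exp_sech u (z + \<i>) = - of_real (exp (-u)) * exp_sech u z"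
proof -
  have "exp (\<i> * (z + \<i>) * u) = exp (of_real (-u)) * exp (\<i> * z * u)"
    by (simp add: algebra_simps flip: exp_add)
  moreover have "cosh (pi * (z + \<i>)) = - cosh (pi * z)"
    using cosh_plus_i_pi[of "pi * z"] by (simp add: algebra_simps)
  ultimately show ?thesis by (simp add: exp_sech_def flip: exp_of_real)
qed

lemma exp_sech_of_real: "exp_sech u (Complex x 0) = exp (\<i> * (x * u)) / cosh (pi * x)"
proof -
  have "pi * Complex x 0 = Complex (pi * x) 0" by (simp add: complex_eq_iff)
  then have "cosh (pi * Complex x 0) = cosh (pi * x)"
    by (simp only:) (simp add: cosh_Complex complex_eq_iff)
  then show ?thesis by (simp add: exp_sech_def Complex_eq mult.assoc)
qed

lemma norm_exp_sech_of_real: "norm (exp_sech u (Complex x 0)) = 1 / cosh (pi * x)"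
  by (simp add: exp_sech_of_real norm_divide)

lemma continuous_on_exp_sech:
  assumes "\<And>t. t \<in> A \<Longrightarrow> Re (g t) \<noteq> 0 \<or> cos (pi * Im (g t)) \<noteq> 0" "continuous_on A g"
  shows "continuous_on A (\<lambda>t. exp_sech u (g t))"
  unfolding exp_sech_def
  using assms cosh_pi_eq_0_imp[of "g _"] by (intro continuous_intros continuous_on_cosh) auto

lemma continuous_on_exp_sech_horizontal:
  "c \<in> {0, 1} \<Longrightarrow> continuous_on A (\<lambda>x. exp_sech u (Complex x c))"
  by (intro continuous_on_exp_sech) (auto intro!: continuous_intros simp: Complex_eq)

lemma continuous_on_exp_sech_vertical:
  "s \<noteq> 0 \<Longrightarrow> continuous_on A (\<lambda>y. exp_sech u (Complex s y))"
  by (intro continuous_on_exp_sech) (auto intro!: continuous_intros simp: Complex_eq)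

lemma contour_integral_rectpath_exp_sech:
  assumes "R > 0"
  shows "contour_integral (rectpath (Complex (-R) 0) (Complex R 1)) (exp_sech u) = 2 * exp (- u / 2)"
proof -
  define S where "S = {z. -1/2 < Im z} \<inter> {z. Im z < 3/2}"
  define \<gamma> where "\<gamma> = rectpath (Complex (-R) 0) (Complex R 1)"
  have zero_in_S: "z = \<i>/2" if z: "z \<in> S" "cosh (pi * z) = 0" for z :: complex
  proof -
    obtain i :: int where "odd i" "pi * Im z = of_int i * (pi/2)" "Re z = 0"
      using cosh_pi_eq_0_imp[OF z(2)] cos_zero_iff_int by blast
    moreover from this have "Im z = of_int i / 2" by (simp add: field_simps)
    moreover have "-1 < i" "i < 3" using \<open>Im z = of_int i / 2\<close> z(1) by (auto simp: S_def)
    ultimately show ?thesis by (simp add: complex_eq_iff) presburger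
  qed
  have hol: "exp_sech u holomorphic_on S - {\<i>/2}"
    unfolding exp_sech_def by (intro holomorphic_intros) (auto dest: zero_in_S)
  have "contour_integral \<gamma> (exp_sech u) =
          2 * pi * \<i> * (\<Sum>p\<in>{\<i>/2}. winding_number \<gamma> p * residue (exp_sech u) p)"
  proof (rule Residue_theorem[OF _ _ _ hol])
    show "open S"
      unfolding S_def by (intro open_Int open_halfspace_Im_gt open_halfspace_Im_lt)
    show "connected S"
      unfolding S_def
      by (intro convex_connected convex_Int convex_halfspace_Im_gt convex_halfspace_Im_lt)
    show "path_image \<gamma> \<subseteq> S - {\<i>/2}"
      using assms by (auto simp: \<gamma>_def path_image_rectpath S_def complex_eq_iff)
    show "\<forall>z. z \<notin> S \<longrightarrow> winding_number \<gamma> z = 0"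
      using assms by (auto intro!: winding_number_rectpath_outside simp: \<gamma>_def S_def in_cbox_complex_iff)
  qed (auto simp: \<gamma>_def)
  also have "\<dots> = 2 * pi * \<i> * (winding_number \<gamma> (\<i>/2) * residue (exp_sech u) (\<i>/2))"
    by simp
  also have "winding_number \<gamma> (\<i>/2) = 1"
    using assms by (auto intro!: winding_number_rectpath simp: \<gamma>_def in_box_complex_iff)
  also have "residue (exp_sech u) (\<i>/2) = exp (\<i> * (\<i>/2) * u) / (pi * sinh (pi * (\<i>/2)))"
    unfolding exp_sech_def[abs_def]
  proof (rule residue_simple_pole_deriv[where s = UNIV])
    have e: "pi * (\<i>/2) = Complex 0 (pi/2)" by (simp add: complex_eq_iff)
    show "cosh (pi * (\<i>/2)) = 0" "pi * sinh (pi * (\<i>/2)) \<noteq> 0"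
      unfolding e by (simp_all add: cosh_Complex sinh_Complex complex_eq_iff)
  qed (auto intro!: holomorphic_intros derivative_eq_intros)
  also have "exp (\<i> * (\<i>/2) * u) = exp (-u/2)"
    by (simp add: exp_of_real[symmetric])
  also have "pi * sinh (pi * (\<i>/2)) = \<i> * pi"
  proof -
    have "pi * (\<i>/2) = Complex 0 (pi/2)" by (simp add: complex_eq_iff)
    then show ?thesis by (simp only:) (simp add: sinh_Complex complex_eq_iff)
  qed
  finally show ?thesis by (simp add: \<gamma>_def field_simps)
qed

definition exp_sech_side_integral :: "real \<Rightarrow> real \<Rightarrow> complex" where
  "exp_sech_side_integral u s = integral {0..1} (\<lambda>y. exp_sech u (Complex s y))"

definition exp_sech_partial_integral :: "real \<Rightarrow> real \<Rightarrow> complex" where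
  "exp_sech_partial_integral u R = integral {-R..R} (\<lambda>x. exp_sech u (Complex x 0))"

lemma contour_integral_rectpath_exp_sech_sides:
  assumes "R > 0"
  shows "contour_integral (rectpath (Complex (-R) 0) (Complex R 1)) (exp_sech u) =
           (1 + of_real (exp (-u))) * exp_sech_partial_integral u R
           + \<i> * (exp_sech_side_integral u R - exp_sech_side_integral u (-R))"
proof -
  let ?I = "exp_sech_partial_integral u R" and ?V = "exp_sech_side_integral u"
  have bottom: "(exp_sech u has_contour_integral ?I) (linepath (Complex (-R) 0) (Complex R 0))"
    using assms unfolding exp_sech_partial_integral_def
    by (subst has_contour_integral_linepath_same_Im_iff[where c=0 and a="-R" and b=R])
       (auto intro!: integrable_integral integrable_continuous_interval continuous_on_exp_sech_horizontal)
  have side: "(exp_sech u has_contour_integral (\<i> * ?V s)) (linepath (Complex s 0) (Complex s 1))"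
    if "s \<noteq> 0" for s
    using that unfolding exp_sech_side_integral_def
    by (subst has_contour_integral_linepath_same_Re_iff[where c=s and a=0 and b=1])
       (auto intro!: integrable_integral integrable_continuous_interval continuous_on_exp_sech_vertical)
  have "((\<lambda>x. - exp (-u) * exp_sech u (Complex x 0)) has_integral (- exp (-u) * ?I)) {-R..R}"
    unfolding exp_sech_partial_integral_def
    by (intro has_integral_mult_right integrable_integral integrable_continuous_interval
        continuous_on_exp_sech_horizontal) auto
  then have "((\<lambda>x. exp_sech u (Complex x 1)) has_integral (- exp (-u) * ?I)) {-R..R}"
    using exp_sech_plus_i[of u "Complex _ 0"] by (simp add: Complex_eq)
  then have top: "(exp_sech u has_contour_integral (- exp (-u) * ?I)) (linepath (Complex (-R) 1) (Complex R 1))"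
    using assms by (subst has_contour_integral_linepath_same_Im_iff[where c=1 and a="-R" and b=R]) auto
  have right: "(exp_sech u has_contour_integral (\<i> * ?V R)) (linepath (Complex R 0) (Complex R 1))"
    using assms by (intro side) simp
  have left: "(exp_sech u has_contour_integral - (\<i> * ?V (-R))) (linepath (Complex (-R) 1) (Complex (-R) 0))"
    using has_contour_integral_reversepath[OF _ side[of "-R"]] assms by simp
  have top': "(exp_sech u has_contour_integral (exp (-u) * ?I)) (linepath (Complex R 1) (Complex (-R) 1))"
    using has_contour_integral_reversepath[OF _ top] by simp
  have "rectpath (Complex (-R) 0) (Complex R 1) =
          linepath (Complex (-R) 0) (Complex R 0) +++ (linepath (Complex R 0) (Complex R 1) +++
          (linepath (Complex R 1) (Complex (-R) 1) +++ linepath (Complex (-R) 1) (Complex (-R) 0)))"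
    by (simp add: rectpath_def Let_def)
  then have "(exp_sech u has_contour_integral
          (?I + (\<i> * ?V R + (exp (-u) * ?I + - (\<i> * ?V (-R))))))
          (rectpath (Complex (-R) 0) (Complex R 1))"
    by (simp only:) (intro has_contour_integral_join bottom right top' left valid_path_join; simp)
  then show ?thesis
    by (subst contour_integral_unique) (auto simp: algebra_simps)
qed

lemma norm_exp_sech_vertical_le:
  assumes "s \<noteq> 0" "0 \<le> y" "y \<le> 1"
  shows "norm (exp_sech u (Complex s y)) \<le> exp \<bar>u\<bar> / \<bar>sinh (pi * s)\<bar>"
proof -
  have "norm (exp (\<i> * Complex s y * u)) = exp (- (y * u))"
    by (simp add: norm_exp_eq_Re)
  also have "\<dots> \<le> exp \<bar>u\<bar>"
  proof -
    have "\<bar>y * u\<bar> \<le> \<bar>u\<bar>" using assms by (simp add: abs_mult mult_left_le_one_le)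
    then show ?thesis by simp
  qed
  finally have num: "norm (exp (\<i> * Complex s y * u)) \<le> exp \<bar>u\<bar>" .
  have "pi * Complex s y = Complex (pi * s) (pi * y)" by (simp add: complex_eq_iff)
  then have den: "\<bar>sinh (pi * s)\<bar> \<le> norm (cosh (pi * Complex s y))"
    using abs_sinh_le_norm_cosh_Complex by metis
  show ?thesis
    unfolding exp_sech_def norm_divide using assms num den by (intro frac_le) auto
qed

lemma tendsto_exp_sech_side_integral: "(exp_sech_side_integral u \<longlongrightarrow> 0) at_infinity"
proof (rule Lim_null_comparison)
  have "norm (exp_sech_side_integral u s) \<le> exp \<bar>u\<bar> / \<bar>sinh (pi * s)\<bar>" if "s \<noteq> 0" for s
  proof -
    have "((\<lambda>y. exp_sech u (Complex s y)) has_integral exp_sech_side_integral u s) {0..1}"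
      unfolding exp_sech_side_integral_def using that
      by (auto intro!: integrable_integral integrable_continuous_interval continuous_on_exp_sech_vertical)
    from has_integral_bound_real[OF _ _ this, of _ "{}"] show ?thesis
      using that norm_exp_sech_vertical_le by simp
  qed
  moreover have "\<forall>\<^sub>F s in at_infinity. s \<noteq> (0::real)"
    unfolding eventually_at_infinity by (auto intro!: exI[of _ 1])
  ultimately show "\<forall>\<^sub>F s in at_infinity. norm (exp_sech_side_integral u s) \<le> exp \<bar>u\<bar> / \<bar>sinh (pi * s)\<bar>"
    by (auto elim: eventually_mono)
  show "((\<lambda>s. exp \<bar>u\<bar> / \<bar>sinh (pi * s)\<bar>) \<longlongrightarrow> 0) at_infinity"
    unfolding at_infinity_eq_at_top_bot by (rule filterlim_sup; real_asymp)
qed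

lemma sech_half_eq: "2 * exp (- u / 2) / (1 + exp (-u)) = 1 / cosh (u / 2 :: real)"
proof -
  have "exp (-u) = exp (- u / 2) * exp (- u / 2)" "exp (u/2) * exp (- u / 2) = 1"
    by (simp_all flip: exp_add)
  then show ?thesis
    by (simp add: cosh_def exp_minus field_simps)
qed

lemma tendsto_exp_sech_partial_integral:
  "((\<lambda>R. exp_sech_partial_integral u R) \<longlongrightarrow> of_real (1 / cosh (u / 2))) at_top"
proof -
  let ?V = "exp_sech_side_integral u"
  define E :: complex where "E = 1 + exp (-u)"
  have "Re E > 0"
    unfolding E_def by (simp add: add_pos_pos)
  then have "E \<noteq> 0" by auto
  have eq: "exp_sech_partial_integral u R = (2 * exp (- u / 2) - \<i> * (?V R - ?V (-R))) / E"
    if "R > 0" for R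
    using contour_integral_rectpath_exp_sech[OF that, of u]
      contour_integral_rectpath_exp_sech_sides[OF that, of u] \<open>E \<noteq> 0\<close>
    by (simp add: E_def field_simps)
  have "(?V \<longlongrightarrow> 0) at_top" "((\<lambda>R. ?V (-R)) \<longlongrightarrow> 0) at_top"
    using tendsto_exp_sech_side_integral[of u]
    by (auto intro: tendsto_mono at_top_le_at_infinity filterlim_compose[OF _ filterlim_uminus_at_bot_at_top]
        tendsto_mono[OF at_bot_le_at_infinity])
  then have "((\<lambda>R. (2 * exp (- u / 2) - \<i> * (?V R - ?V (-R))) / E) \<longlongrightarrow> (2 * exp (- u / 2) - \<i> * (0 - 0)) / E) at_top"
    by (intro tendsto_intros \<open>E \<noteq> 0\<close>)
  also have "(2 * exp (- u / 2) - \<i> * (0 - 0)) / E = of_real (1 / cosh (u / 2))"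
    unfolding E_def sech_half_eq[symmetric] by simp
  finally show ?thesis
    by (rule Lim_transform_eventually) (auto intro!: eventually_mono[OF eventually_gt_at_top[of 0]] simp: eq)
qed

lemma integrable_sech_lborel: "integrable lborel (\<lambda>x. 1 / cosh (pi * x))"
proof -
  let ?F = "\<lambda>x. 2 / pi * arctan (exp (pi * x))"
  have "set_integrable lborel (einterval (-\<infinity>) \<infinity>) (\<lambda>x. 1 / cosh (pi * x))"
  proof (rule interval_integral_FTC_nonneg[where F = ?F and A = 0 and B = 1])
    show "(?F has_real_derivative 1 / cosh (pi * x)) (at x)" for x
    proof -
      have "2 / pi * (inverse (1 + (exp (pi * x))\<^sup>2) * (exp (pi * x) * pi)) = 1 / cosh (pi * x)"
        by (simp add: cosh_def exp_minus field_simps power2_eq_square add_pos_pos)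
      then show ?thesis by (auto intro!: derivative_eq_intros)
    qed
    show "((?F \<circ> real_of_ereal) \<longlongrightarrow> 0) (at_right (- \<infinity>))"
         "((?F \<circ> real_of_ereal) \<longlongrightarrow> 1) (at_left \<infinity>)"
      unfolding ereal_tendsto_simps by real_asymp+
  qed (auto intro!: continuous_intros simp: add_pos_pos)
  then show ?thesis by (simp add: set_integrable_def)
qed

lemma has_integral_exp_sech:
  "((\<lambda>x. exp_sech u (Complex x 0)) has_integral of_real (1 / cosh (u / 2))) UNIV"
proof -
  define f where "f k x = (if x \<in> {-real k..real k} then exp_sech u (Complex x 0) else 0)" for k x
  have "f k integrable_on UNIV" for k
    unfolding f_def integrable_restrict_UNIV
    by (intro integrable_continuous_interval continuous_on_exp_sech_horizontal) auto
  moreover have "(\<lambda>x. 1 / cosh (pi * x)) integrable_on UNIV"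
    by (rule integrable_on_lborel[OF integrable_sech_lborel])
  moreover have "norm (f k x) \<le> 1 / cosh (pi * x)" for k x
    by (simp add: f_def norm_exp_sech_of_real)
  moreover have "(\<lambda>k. f k x) \<longlonglongrightarrow> exp_sech u (Complex x 0)" for x
  proof (rule tendsto_eventually)
    obtain N :: nat where "\<bar>x\<bar> \<le> real N" using real_arch_simple by blast
    then show "\<forall>\<^sub>F k in sequentially. f k x = exp_sech u (Complex x 0)"
      unfolding eventually_sequentially f_def by (intro exI[of _ N]) auto
  qed
  ultimately have dc: "(\<lambda>x. exp_sech u (Complex x 0)) integrable_on UNIV"
      "(\<lambda>k. integral UNIV (f k)) \<longlonglongrightarrow> integral UNIV (\<lambda>x. exp_sech u (Complex x 0))"
    by (rule dominated_convergence; assumption)+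
  have "integral UNIV (f k) = exp_sech_partial_integral u (real k)" for k
    unfolding f_def exp_sech_partial_integral_def integral_restrict_UNIV by simp
  moreover have "(\<lambda>k. exp_sech_partial_integral u (real k)) \<longlonglongrightarrow> of_real (1 / cosh (u / 2))"
    by (rule filterlim_compose[OF tendsto_exp_sech_partial_integral filterlim_real_sequentially])
  ultimately have "integral UNIV (\<lambda>x. exp_sech u (Complex x 0)) = of_real (1 / cosh (u / 2))"
    using dc(2) LIMSEQ_unique by simp
  with dc(1) show ?thesis
    using integrable_integral by fastforce
qed

lemma has_integral_cos_div_cosh:
  "((\<lambda>x. cos (x * u) / cosh (pi * x)) has_integral 1 / cosh (u / 2)) UNIV"
  using has_integral_Re[OF has_integral_exp_sech[of u]]
  by (simp add: exp_sech_of_real Re_exp Re_divide_of_real mult.commute)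

lemma borel_measurable_cosh_real [measurable]: "(cosh :: real \<Rightarrow> real) \<in> borel_measurable borel"
  by (intro borel_measurable_continuous_onI continuous_on_cosh continuous_on_id)

lemma integrable_div_cosh:
  assumes [measurable]: "g \<in> borel_measurable borel" and bound: "\<And>x. \<bar>g x\<bar> \<le> C"
  shows "integrable lborel (\<lambda>x. g x / cosh (pi * x))"
proof (rule Bochner_Integration.integrable_bound[OF integrable_mult_right[OF integrable_sech_lborel, of C]])
  have "norm (g x / cosh (pi * x)) \<le> norm (C * (1 / cosh (pi * x)))" for x
  proof -
    have "0 < cosh (pi * x)" by simp
    with bound[of x] show ?thesis
      by (simp add: abs_divide divide_right_mono)
  qed
  then show "AE x in lborel. norm (g x / cosh (pi * x)) \<le> norm (C * (1 / cosh (pi * x)))"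
    by simp
  show "(\<lambda>x. g x / cosh (pi * x)) \<in> borel_measurable lborel" by measurable
qed

lemma lborel_integral_cos_div_cosh:
  "integrable lborel (\<lambda>x. cos (x * u) / cosh (pi * x))"
  "(\<integral>x. cos (x * u) / cosh (pi * x) \<partial>lborel) = 1 / cosh (u / 2)"
proof -
  show i: "integrable lborel (\<lambda>x. cos (x * u) / cosh (pi * x))"
    by (rule integrable_div_cosh[where C = 1]) auto
  show "(\<integral>x. cos (x * u) / cosh (pi * x) \<partial>lborel) = 1 / cosh (u / 2)"
    using integral_lborel[OF i] integral_unique[OF has_integral_cos_div_cosh] by simp
qed

section \<open>The Fourier transform of \<open>rho\<close>\<close>

lemma set_integral_exp_neg_cos:
  fixes b :: real
  shows "set_integrable lborel {0<..} (\<lambda>r. exp (-r) * cos (b * r))"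
        "(LINT r:{0<..}|lborel. exp (-r) * cos (b * r)) = 1 / (1 + b^2)"
proof -
  have exp_int: "set_integrable lborel {0<..} (\<lambda>r::real. exp (-r))"
    using integrable_I0i_exp_mscale[of 1] by simp
  show int: "set_integrable lborel {0<..} (\<lambda>r. exp (-r) * cos (b * r))"
    by (rule set_integrable_bound[OF exp_int])
       (auto simp: set_borel_measurable_def abs_mult intro!: mult_left_le_one_le)
  define F where "F r = exp (-r) * (b * sin (b * r) - cos (b * r)) / (1 + b^2)" for r
  have pos: "1 + b^2 > 0" by (simp add: add_pos_nonneg)
  have "(LBINT r=0..\<infinity>. exp (-r) * cos (b * r)) = 0 - (- 1 / (1 + b^2))"
  proof (rule interval_integral_FTC_integrable[where F = F])
    show "(F has_vector_derivative exp (- x) * cos (b * x)) (at x)" for x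
    proof -
      have "(F has_real_derivative (exp (-x) * (b * (cos (b * x) * b) + sin (b * x) * b) * (1 + b^2)
             - exp (-x) * (b * sin (b * x) - cos (b * x)) * (1 + b^2)) / (1 + b^2) / (1 + b^2)) (at x)"
        unfolding F_def using pos by (auto intro!: derivative_eq_intros simp: field_simps)
      also have "exp (-x) * (b * (cos (b * x) * b) + sin (b * x) * b) * (1 + b^2)
             - exp (-x) * (b * sin (b * x) - cos (b * x)) * (1 + b^2)
             = (exp (- x) * cos (b * x)) * ((1 + b^2) * (1 + b^2))"
        by (simp add: power2_eq_square) algebra
      finally show ?thesis
        using pos by (simp add: has_real_derivative_iff_has_vector_derivative)
    qed
    show "set_integrable lborel (einterval 0 \<infinity>) (\<lambda>x. exp (- x) * cos (b * x))"
      using int by (simp add: zero_ereal_def)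
    have "(F \<longlongrightarrow> F 0) (at_right 0)"
      unfolding F_def using pos by (intro tendsto_intros continuous_intros) auto
    then show "((F \<circ> real_of_ereal) \<longlongrightarrow> - 1 / (1 + b\<^sup>2)) (at_right 0)"
      by (simp add: zero_ereal_def ereal_tendsto_simps F_def)
    show "((F \<circ> real_of_ereal) \<longlongrightarrow> 0) (at_left \<infinity>)"
      unfolding ereal_tendsto_simps
    proof (rule Lim_null_comparison)
      have "\<bar>b * sin (b * x) - cos (b * x)\<bar> \<le> \<bar>b\<bar> + 1" for x
      proof -
        have "\<bar>b * sin (b * x)\<bar> \<le> \<bar>b\<bar>" unfolding abs_mult by (rule mult_left_le) auto
        then show ?thesis using abs_cos_le_one[of "b * x"] by linarith
      qed
      then show "\<forall>\<^sub>F x in at_top. norm (F x) \<le> exp (-x) * (\<bar>b\<bar> + 1) / (1 + b^2)"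
        unfolding F_def using pos by (auto simp: abs_mult divide_right_mono)
      have "((\<lambda>x::real. exp (-x)) \<longlongrightarrow> 0) at_top" by real_asymp
      then show "((\<lambda>x. exp (-x) * (\<bar>b\<bar> + 1) / (1 + b^2)) \<longlongrightarrow> 0) at_top"
        by (intro tendsto_divide_zero tendsto_mult_left_zero)
    qed
  qed (auto simp: zero_ereal_def)
  then show "(LINT r:{0<..}|lborel. exp (-r) * cos (b * r)) = 1 / (1 + b^2)"
    by (simp add: interval_lebesgue_integral_0_infty)
qed

lemma set_integral_exp_neg_div_cosh:
  fixes a :: real
  shows "set_integrable lborel {0<..} (\<lambda>r. exp (-r) / cosh (a + r))"
        "(LINT r:{0<..}|lborel. exp (-r) / cosh (a + r)) = exp a * ln (1 + exp (-2*a))"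
proof -
  define F where "F r = - exp a * ln (1 + exp (-2*a - 2*r))" for r
  have D: "(F has_real_derivative exp (-r) / cosh (a + r)) (at r)" for r
  proof -
    define X where "X = exp (a + r)"
    have "X > 0" unfolding X_def by simp
    have e: "exp (-2*a - 2*r) = 1 / (X * X)" "exp (-r) = exp a / X" "cosh (a + r) = (X + 1 / X) / 2"
      unfolding X_def cosh_def by (simp_all add: exp_minus field_simps flip: exp_add)
    have "1 + exp (-2*a - 2*r) > 0" by (simp add: add_pos_pos)
    then have "(F has_real_derivative - exp a * (exp (-2*a - 2*r) * (0 - 2) / (1 + exp (-2*a - 2*r)))) (at r)"
      unfolding F_def by (auto intro!: derivative_eq_intros)
    also have "- exp a * (exp (-2*a - 2*r) * (0 - 2) / (1 + exp (-2*a - 2*r))) = exp (-r) / cosh (a + r)"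
      unfolding e using \<open>X > 0\<close> by (simp add: field_simps)
    finally show ?thesis .
  qed
  have "((\<lambda>r. - exp a * ln (1 + exp (-2*a - 2*r))) \<longlongrightarrow> - exp a * ln (1 + 0)) at_top"
    by (intro tendsto_intros) (real_asymp, simp)
  then have F_top: "(F \<longlongrightarrow> 0) at_top" unfolding F_def by simp
  have "1 + exp (- (2 * a)) > 0" by (simp add: add_pos_pos)
  then have F_0: "(F \<longlongrightarrow> F 0) (at_right 0)"
    unfolding F_def by (intro tendsto_intros) auto
  note FTC = interval_integral_FTC_nonneg[where F = F and A = "F 0" and B = 0
       and a = 0 and b = \<infinity> and f = "\<lambda>r. exp (-r) / cosh (a + r)"]
  have int: "set_integrable lborel (einterval 0 \<infinity>) (\<lambda>r. exp (-r) / cosh (a + r))"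
       and val: "(LBINT r=0..\<infinity>. exp (-r) / cosh (a + r)) = 0 - F 0"
    by (rule FTC(1) FTC(2);
        auto simp: zero_ereal_def ereal_tendsto_simps D F_top F_0 intro!: continuous_intros)+
  show "set_integrable lborel {0<..} (\<lambda>r. exp (-r) / cosh (a + r))"
    using int by (simp add: zero_ereal_def)
  show "(LINT r:{0<..}|lborel. exp (-r) / cosh (a + r)) = exp a * ln (1 + exp (-2*a))"
    using val by (simp add: interval_lebesgue_integral_0_infty F_def)
qed

lemma integrable_pair_lborel_mult:
  fixes f g :: "real \<Rightarrow> real"
  assumes f: "integrable lborel f" and g: "integrable lborel g"
  shows "integrable (lborel \<Otimes>\<^sub>M lborel) (\<lambda>(x, y). f x * g y)"
proof (rule lborel_pair.Fubini_integrable)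
  note [measurable] = borel_measurable_integrable[OF f] borel_measurable_integrable[OF g]
  show "(\<lambda>(x, y). f x * g y) \<in> borel_measurable (lborel \<Otimes>\<^sub>M lborel)"
    by measurable
  have "(\<integral>y. norm (f x * g y) \<partial>lborel) = \<bar>f x\<bar> * (\<integral>y. \<bar>g y\<bar> \<partial>lborel)" for x
    by (simp add: abs_mult)
  then show "integrable lborel (\<lambda>x. \<integral>y. norm ((\<lambda>(x, y). f x * g y) (x, y)) \<partial>lborel)"
    using f by (simp add: integrable_mult_left)
  show "AE x in lborel. integrable lborel (\<lambda>y. (\<lambda>(x, y). f x * g y) (x, y))"
    using g by simp
qed

lemma rho_nonneg: "0 \<le> rho w"
  unfolding rho_def by (simp add: add_pos_nonneg less_imp_le)

lemma rho_minus: "rho (-w) = rho w"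
  unfolding rho_def by simp

lemma borel_measurable_rho [measurable]: "rho \<in> borel_measurable borel"
  unfolding rho_def[abs_def] by measurable

lemma integrable_rho_mult:
  assumes [measurable]: "g \<in> borel_measurable borel" and bound: "\<And>w. \<bar>g w\<bar> \<le> 1"
  shows "integrable lborel (\<lambda>w. rho w * g w)"
proof -
  have "\<bar>2 * g w / (1 + 4 * w\<^sup>2)\<bar> \<le> 2" for w
    using bound[of w] by (simp add: abs_mult divide_le_eq add_pos_nonneg)
      (use zero_le_power2[of w] in linarith)
  then have "integrable lborel (\<lambda>w. (2 * g w / (1 + 4 * w\<^sup>2)) / cosh (pi * w))"
    by (intro integrable_div_cosh) auto
  then show ?thesis by (simp add: rho_def mult.commute)
qed

lemma rho_eq_set_integral:
  "rho w = 2 / cosh (pi * w) * (LINT r:{0<..}|lborel. exp (-r) * cos (2 * w * r))"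
  unfolding set_integral_exp_neg_cos(2) rho_def by (simp add: power2_eq_square)

definition rho_hat :: "real \<Rightarrow> real" where
  "rho_hat t = exp (t/2) * ln (1 + exp (-t)) + exp (-t/2) * ln (1 + exp t)"

lemma lborel_integral_cos_mult_cos_div_cosh:
  "(\<integral>w. 2 * cos (w * t) * cos (2 * w * r) / cosh (pi * w) \<partial>lborel) =
     1 / cosh (t/2 + r) + 1 / cosh (-t/2 + r)"
proof -
  have "2 * cos (w * t) * cos (2 * w * r) / cosh (pi * w) =
          cos (w * (t + 2 * r)) / cosh (pi * w) + cos (w * (t - 2 * r)) / cosh (pi * w)" for w
    by (simp add: cos_add cos_diff algebra_simps add_divide_distrib[symmetric])
  then have "(\<integral>w. 2 * cos (w * t) * cos (2 * w * r) / cosh (pi * w) \<partial>lborel) =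
      (\<integral>w. cos (w * (t + 2 * r)) / cosh (pi * w) \<partial>lborel) +
      (\<integral>w. cos (w * (t - 2 * r)) / cosh (pi * w) \<partial>lborel)"
    by (simp add: lborel_integral_cos_div_cosh(1) flip: Bochner_Integration.integral_add)
  also have "\<dots> = 1 / cosh ((t + 2 * r) / 2) + 1 / cosh ((t - 2 * r) / 2)"
    by (simp only: lborel_integral_cos_div_cosh(2))
  also have "(t + 2 * r) / 2 = t/2 + r" by simp
  also have "(t - 2 * r) / 2 = - (-t/2 + r)" by simp
  finally show ?thesis by (simp only: cosh_minus)
qed

lemma integrable_cos_div_cosh_mult_exp:
  "integrable (lborel \<Otimes>\<^sub>M lborel)
     (\<lambda>(w, r). indicator {0<..} r * exp (-r) * (2 * cos (w * t) * cos (2 * w * r) / cosh (pi * w)))"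
proof -
  define E where "E r = indicator {0<..} r * exp (-r)" for r :: real
  have "integrable lborel E"
    using set_integral_exp_neg_cos(1)[of 0] by (simp add: E_def[abs_def] set_integrable_def)
  then have "integrable (lborel \<Otimes>\<^sub>M lborel) (\<lambda>(w, r). 2 / cosh (pi * w) * E r)"
    using integrable_div_cosh[of "\<lambda>_. 2" 2] by (intro integrable_pair_lborel_mult) auto
  then show ?thesis
  proof (rule Bochner_Integration.integrable_bound)
    show "(\<lambda>(w, r). indicator {0<..} r * exp (-r) * (2 * cos (w * t) * cos (2 * w * r) / cosh (pi * w)))
            \<in> borel_measurable (lborel \<Otimes>\<^sub>M lborel)"
      by measurable
    have "\<bar>E r * (2 * cos (w * t) * cos (2 * w * r) / cosh (pi * w))\<bar> \<le> \<bar>2 / cosh (pi * w) * E r\<bar>"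
      for w r
    proof -
      have "\<bar>cos (w * t)\<bar> * \<bar>cos (2 * w * r)\<bar> \<le> 1 * 1"
        by (intro mult_mono) auto
      then have "\<bar>2 * cos (w * t) * cos (2 * w * r)\<bar> / cosh (pi * w) \<le> 2 / cosh (pi * w)"
        by (intro divide_right_mono) (auto simp: abs_mult)
      from mult_left_mono[OF this abs_ge_zero[of "E r"]] show ?thesis
        by (simp add: abs_mult abs_divide mult.commute)
    qed
    then show "AE x in lborel \<Otimes>\<^sub>M lborel.
        norm ((\<lambda>(w, r). indicator {0<..} r * exp (-r) * (2 * cos (w * t) * cos (2 * w * r) / cosh (pi * w))) x)
          \<le> norm ((\<lambda>(w, r). 2 / cosh (pi * w) * E r) x)"
      by (auto simp: E_def[symmetric])
  qed
qed

lemma lborel_integral_rho_cos: "(\<integral>w. rho w * cos (w * t) \<partial>lborel) = rho_hat t"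
proof -
  define H where "H w r = indicator {0<..} r * exp (-r) * (2 * cos (w * t) * cos (2 * w * r) / cosh (pi * w))"
    for w r :: real
  have "(\<integral>w. (\<integral>r. H w r \<partial>lborel) \<partial>lborel) = (\<integral>r. (\<integral>w. H w r \<partial>lborel) \<partial>lborel)"
    using integrable_cos_div_cosh_mult_exp[of t]
    by (intro lborel_pair.Fubini_integral[symmetric]) (simp add: H_def)
  moreover have "(\<integral>r. H w r \<partial>lborel) = rho w * cos (w * t)" for w
  proof -
    have "(\<integral>r. H w r \<partial>lborel) =
        2 * cos (w * t) / cosh (pi * w) * (LINT r:{0<..}|lborel. exp (-r) * cos (2 * w * r))"
      unfolding H_def set_lebesgue_integral_def
      by (simp add: mult_ac flip: integral_mult_right_zero)
    then show ?thesis by (simp add: rho_eq_set_integral)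
  qed
  moreover have "(\<integral>w. H w r \<partial>lborel) =
      indicator {0<..} r * exp (-r) * (1 / cosh (t/2 + r) + 1 / cosh (-t/2 + r))" for r
    unfolding H_def lborel_integral_cos_mult_cos_div_cosh[symmetric] by (rule integral_mult_right_zero)
  ultimately have "(\<integral>w. rho w * cos (w * t) \<partial>lborel) =
      (LINT r:{0<..}|lborel. exp (-r) / cosh (t/2 + r) + exp (-r) / cosh (-t/2 + r))"
    unfolding set_lebesgue_integral_def
    by (simp add: distrib_left)
  also have "\<dots> = (LINT r:{0<..}|lborel. exp (-r) / cosh (t/2 + r)) +
                    (LINT r:{0<..}|lborel. exp (-r) / cosh (-t/2 + r))"
    by (intro set_integral_add set_integral_exp_neg_div_cosh(1))
  also have "\<dots> = rho_hat t"
    unfolding set_integral_exp_neg_div_cosh(2) rho_hat_def by simp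
  finally show ?thesis .
qed

lemma lborel_integral_odd_eq_0:
  fixes f :: "real \<Rightarrow> real"
  assumes "\<And>x. f (-x) = - f x"
  shows "(\<integral>x. f x \<partial>lborel) = 0"
proof -
  have "(\<integral>x. f x \<partial>lborel) = \<bar>-1\<bar> *\<^sub>R (\<integral>x. f (0 + (-1) * x) \<partial>lborel)"
    by (rule lborel_integral_real_affine) simp
  also have "\<dots> = - (\<integral>x. f x \<partial>lborel)"
    by (simp add: assms)
  finally show ?thesis by simp
qed

lemma has_integral_rho_exp:
  "((\<lambda>w. of_real (rho w) * exp (\<i> * of_real (w * t))) has_integral of_real (rho_hat t)) UNIV"
proof -
  have "((\<lambda>w. rho w * cos (w * t)) has_integral rho_hat t) UNIV"
    using has_integral_integral_lborel[OF integrable_rho_mult[of "\<lambda>w. cos (w * t)"]]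
    by (simp add: lborel_integral_rho_cos)
  moreover have "((\<lambda>w. rho w * sin (w * t)) has_integral 0) UNIV"
    using has_integral_integral_lborel[OF integrable_rho_mult[of "\<lambda>w. sin (w * t)"]]
      lborel_integral_odd_eq_0[of "\<lambda>w. rho w * sin (w * t)"]
    by (simp add: rho_minus)
  ultimately have "((\<lambda>w. of_real (rho w * cos (w * t)) + \<i> * of_real (rho w * sin (w * t))) has_integral
         (of_real (rho_hat t) + \<i> * of_real 0)) UNIV"
    by (intro has_integral_add has_integral_mult_right has_integral_of_real)
  moreover have "of_real (rho w * cos (w * t)) + \<i> * of_real (rho w * sin (w * t)) =
                 of_real (rho w) * exp (\<i> * of_real (w * t))" for w
    by (simp add: complex_eq_iff Re_exp Im_exp)
  ultimately show ?thesis by simp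
qed

section \<open>The feature map \<open>Phi\<close>\<close>

lemma cnj_Phi_mult_Phi:
  assumes "x > 0" "y > 0"
  shows "cnj (Phi w x) * Phi w y =
           of_real (sqrt (x * y)) * (of_real (rho w) * exp (\<i> * of_real (w * (ln x - ln y))))"
proof -
  have "sqrt (x * rho w) * sqrt (y * rho w) = sqrt (x * y) * rho w"
    using rho_nonneg[of w] by (simp add: real_sqrt_mult mult_ac)
  moreover have "cnj (exp (- \<i> * of_real (w * ln x))) * exp (- \<i> * of_real (w * ln y)) =
           exp (\<i> * of_real (w * (ln x - ln y)))"
    by (simp add: exp_cnj exp_add[symmetric] algebra_simps)
  ultimately show ?thesis
    unfolding Phi_def by (simp add: mult_ac flip: of_real_mult)
qed

lemma sqrt_mult_rho_hat_ln:
  assumes "x > 0" "y > 0"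
  shows "sqrt (x * y) * rho_hat (ln x - ln y) = x * ln ((x + y) / x) + y * ln ((x + y) / y)"
proof -
  have half: "exp (ln z / 2) = sqrt z" if "z > 0" for z
    using that powr_half_sqrt[of z] by (simp add: powr_def)
  have "exp ((ln x - ln y) / 2) = sqrt x / sqrt y" "exp (- (ln x - ln y) / 2) = sqrt y / sqrt x"
    using assms by (simp_all add: diff_divide_distrib exp_diff half)
  moreover have "1 + exp (- (ln x - ln y)) = (x + y) / x" "1 + exp (ln x - ln y) = (x + y) / y"
    using assms by (simp_all add: exp_diff field_simps)
  moreover have "sqrt (x * y) * (sqrt x / sqrt y) = x" "sqrt (x * y) * (sqrt y / sqrt x) = y"
    using assms by (simp_all add: real_sqrt_mult field_simps)
  ultimately show ?thesis
    unfolding rho_hat_def distrib_left mult.assoc[symmetric] by simp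
qed

lemma kent_pos_eq:
  assumes "x > 0" "y > 0"
  shows "kent x y = x * ln ((x + y) / x) + y * ln ((x + y) / y)"
  using assms by (simp add: kent_def eta_def ln_div algebra_simps)

lemma kent_zero_left [simp]: "kent 0 y = 0"
  by (simp add: kent_def eta_def)

lemma kent_zero_right [simp]: "kent x 0 = 0"
  by (simp add: kent_def eta_def)

lemma Phi_zero [simp]: "Phi w 0 = 0"
  by (simp add: Phi_def)

lemma has_integral_cnj_Phi_mult_Phi:
  assumes "x \<ge> 0" "y \<ge> 0"
  shows "((\<lambda>w. cnj (Phi w x) * Phi w y) has_integral of_real (kent x y)) UNIV"
proof (cases "x = 0 \<or> y = 0")
  case False
  with assms have "x > 0" "y > 0" by auto
  have "((\<lambda>w. of_real (sqrt (x * y)) * (of_real (rho w) * exp (\<i> * of_real (w * (ln x - ln y)))))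
          has_integral of_real (sqrt (x * y)) * of_real (rho_hat (ln x - ln y))) UNIV"
    by (intro has_integral_mult_right has_integral_rho_exp)
  also have "of_real (sqrt (x * y)) * of_real (rho_hat (ln x - ln y)) = (of_real (kent x y) :: complex)"
    unfolding kent_pos_eq[OF \<open>x > 0\<close> \<open>y > 0\<close>]
      sqrt_mult_rho_hat_ln[OF \<open>x > 0\<close> \<open>y > 0\<close>, symmetric] by simp
  finally show ?thesis
    using \<open>x > 0\<close> \<open>y > 0\<close> by (simp add: cnj_Phi_mult_Phi)
qed auto

lemma pos_def_kernel_of_feature_map:
  fixes k :: "'a \<Rightarrow> 'a \<Rightarrow> real" and F :: "'b::euclidean_space \<Rightarrow> 'a \<Rightarrow> complex"
  assumes feature: "\<And>x y. x \<in> X \<Longrightarrow> y \<in> X \<Longrightarrow>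
             ((\<lambda>w. cnj (F w x) * F w y) has_integral of_real (k x y)) S"
  shows "pos_def_kernel X k"
  unfolding pos_def_kernel_def
proof (intro conjI ballI allI impI)
  fix x y assume "x \<in> X" "y \<in> X"
  have "((\<lambda>w. cnj (F w y) * F w x) has_integral of_real (k x y)) S"
    using has_integral_cnj[THEN iffD2, OF feature[OF \<open>x \<in> X\<close> \<open>y \<in> X\<close>]]
    by (simp add: o_def mult.commute)
  with feature[OF \<open>y \<in> X\<close> \<open>x \<in> X\<close>] have "complex_of_real (k y x) = of_real (k x y)"
    by (rule has_integral_unique)
  then show "k x y = k y x" by simp
next
  fix n :: nat and a :: "nat \<Rightarrow> real" and x :: "nat \<Rightarrow> 'a"
  assume x: "\<forall>i\<in>{1..n}. x i \<in> X"
  define v where "v w = (\<Sum>j=1..n. of_real (a j) * F w (x j))" for w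
  have "((\<lambda>w. \<Sum>i=1..n. \<Sum>j=1..n. of_real (a i * a j) * (cnj (F w (x i)) * F w (x j))) has_integral
           (\<Sum>i=1..n. \<Sum>j=1..n. of_real (a i * a j) * of_real (k (x i) (x j)))) S"
    using x by (intro has_integral_sum has_integral_mult_right feature) auto
  moreover have "(\<Sum>i=1..n. \<Sum>j=1..n. of_real (a i * a j) * (cnj (F w (x i)) * F w (x j))) =
                 of_real ((norm (v w))\<^sup>2)" for w
  proof -
    have "of_real ((norm (v w))\<^sup>2) = cnj (v w) * v w"
      by (subst complex_norm_square) (simp add: mult.commute)
    also have "\<dots> = (\<Sum>i=1..n. \<Sum>j=1..n. of_real (a i * a j) * (cnj (F w (x i)) * F w (x j)))"
      unfolding v_def cnj_sum sum_product by (simp add: mult_ac)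
    finally show ?thesis by simp
  qed
  ultimately have "((\<lambda>w. complex_of_real ((norm (v w))\<^sup>2)) has_integral
           (\<Sum>i=1..n. \<Sum>j=1..n. of_real (a i * a j) * of_real (k (x i) (x j)))) S"
    by simp
  from has_integral_Re[OF this]
  have "((\<lambda>w. (norm (v w))\<^sup>2) has_integral (\<Sum>i=1..n. \<Sum>j=1..n. a i * a j * k (x i) (x j))) S"
    by (simp add: Re_sum)
  then show "0 \<le> (\<Sum>i=1..n. \<Sum>j=1..n. a i * a j * k (x i) (x j))"
    by (rule has_integral_nonneg) simp
qed

theorem lemma3:
  shows "pos_def_kernel {0..1} kent \<and>
    (\<forall>x\<in>{0<..1}. \<forall>y\<in>{0<..1}.
       ((\<lambda>w. cnj (Phi w x) * Phi w y) has_integral complex_of_real (kent x y)) UNIV)"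
  using pos_def_kernel_of_feature_map[of "{0..1}" Phi kent UNIV]
  by (auto intro: has_integral_cnj_Phi_mult_Phi)

end
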